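(* Suppose the quadratic vector equation $Mx=a+b(x,x)$ has a minimal solution $x_\ast$ with $x_\ast>0$ (every component strictly positive). Then $\rho\big(M^{-1}(b(x_\ast,\cdot)+b(\cdot,x_\ast))\big)\leq 1$, and consequently $F'_{x_\ast}=M-b(x_\ast,\cdot)-b(\cdot,x_\ast)$ is an M-matrix.
   Context: Inequalities between vectors/matrices are componentwise. A Z-matrix is a real square matrix with nonpositive off-diagonal entries; an M-matrix is a matrix $sI-P$ with $P\geq0$ entrywise and $s\geq\rho(P)$ ($\rho$ = spectral radius). Let $M\in\mathbb R^{n\times n}$ be a nonsingular M-matrix, $a\in\mathbb R^n$ with $a\geq 0$, and $b:\mathbb R^n\times\mathbb R^n\to\mathbb R^n$ a bilinear map (not necessarily symmetric) with $b(x,y)\geq 0$ whenever $x,y\geq 0$. A solution of $Mx=a+b(x,x)$ means a vector $x\geq 0$ satisfying it; a solution $x_\ast$ is minimal if $x_\ast\leq y$ for every solution $y$. For $x\in\mathbb R^n$, $b(x,\cdot)$ and $b(\cdot,x)$ denote the $n\times n$ matrices of $y\mapsto b(x,y)$ and $y\mapsto b(y,x)$; $F'_x:=M-b(x,\cdot)-b(\cdot,x)$ is the Jacobian of $F(x):=Mx-a-b(x,x)$. *)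

theory Defs
  imports "Jordan_Normal_Form.Spectral_Radius"
begin

definition nonneg_vec :: "real vec \<Rightarrow> bool" where
  "nonneg_vec v \<longleftrightarrow> (\<forall>i < dim_vec v. v $ i \<ge> 0)"

definition pos_vec :: "real vec \<Rightarrow> bool" where
  "pos_vec v \<longleftrightarrow> (\<forall>i < dim_vec v. v $ i > 0)"

definition nonneg_mat :: "real mat \<Rightarrow> bool" where
  "nonneg_mat A \<longleftrightarrow> (\<forall>i < dim_row A. \<forall>j < dim_col A. A $$ (i, j) \<ge> 0)"

definition rho :: "real mat \<Rightarrow> real" where
  "rho A = spectral_radius (map_mat complex_of_real A)"

definition M_matrix :: "nat \<Rightarrow> real mat \<Rightarrow> bool" where
  "M_matrix n A \<longleftrightarrow> A \<in> carrier_mat n n \<and>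
     (\<exists>s P. P \<in> carrier_mat n n \<and> nonneg_mat P \<and> s \<ge> rho P \<and> A = s \<cdot>\<^sub>m 1\<^sub>m n - P)"

definition nonsingular_M_matrix :: "nat \<Rightarrow> real mat \<Rightarrow> bool" where
  "nonsingular_M_matrix n A \<longleftrightarrow> M_matrix n A \<and> invertible_mat A"

definition minv :: "real mat \<Rightarrow> real mat" where
  "minv A = (SOME B. inverts_mat A B \<and> inverts_mat B A)"

definition bilinear_vec :: "nat \<Rightarrow> (real vec \<Rightarrow> real vec \<Rightarrow> real vec) \<Rightarrow> bool" where
  "bilinear_vec n b \<longleftrightarrow>
     (\<forall>x \<in> carrier_vec n. \<forall>y \<in> carrier_vec n. b x y \<in> carrier_vec n) \<and>
     (\<forall>x \<in> carrier_vec n. \<forall>y \<in> carrier_vec n. \<forall>z \<in> carrier_vec n. \<forall>c::real.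
        b (x + y) z = b x z + b y z \<and> b (c \<cdot>\<^sub>v x) z = c \<cdot>\<^sub>v b x z \<and>
        b z (x + y) = b z x + b z y \<and> b z (c \<cdot>\<^sub>v x) = c \<cdot>\<^sub>v b z x)"

text \<open>Matrices of y \<mapsto> b(x,y) and y \<mapsto> b(y,x).\<close>
definition b_left :: "nat \<Rightarrow> (real vec \<Rightarrow> real vec \<Rightarrow> real vec) \<Rightarrow> real vec \<Rightarrow> real mat" where
  "b_left n b x = mat n n (\<lambda>(i, j). b x (unit_vec n j) $ i)"

definition b_right :: "nat \<Rightarrow> (real vec \<Rightarrow> real vec \<Rightarrow> real vec) \<Rightarrow> real vec \<Rightarrow> real mat" where
  "b_right n b x = mat n n (\<lambda>(i, j). b (unit_vec n j) x $ i)"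

definition qve_solution :: "nat \<Rightarrow> real mat \<Rightarrow> real vec \<Rightarrow> (real vec \<Rightarrow> real vec \<Rightarrow> real vec) \<Rightarrow> real vec \<Rightarrow> bool" where
  "qve_solution n M a b x \<longleftrightarrow> x \<in> carrier_vec n \<and> nonneg_vec x \<and> M *\<^sub>v x = a + b x x"

definition qve_minimal_solution :: "nat \<Rightarrow> real mat \<Rightarrow> real vec \<Rightarrow> (real vec \<Rightarrow> real vec \<Rightarrow> real vec) \<Rightarrow> real vec \<Rightarrow> bool" where
  "qve_minimal_solution n M a b x \<longleftrightarrow> qve_solution n M a b x \<and>
     (\<forall>y. qve_solution n M a b y \<longrightarrow> (\<forall>i < n. x $ i \<le> y $ i))"

end

theory Submission
  imports Defs
begin

(* Write the nonsingular M-matrix as M = s I - P with P >= 0, and let C (called coupling below)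
   be the matrix of u |-> b(xs, u) + b(u, xs) for the positive minimal solution xs.  The heart of
   the proof is a "no descent direction" property of xs: there is no nonzero u >= 0 and no
   0 <= theta < 1 with M u <= theta C u.  Indeed, for small t > 0 the point y = xs - t u is then
   a nonnegative supersolution, a + b(y, y) <= M y; the monotone map x |-> (a + P x + b(x, x)) / s
   sends the box [0, y] into itself, so by a Knaster-Tarski argument it has a fixed point there,
   i.e. a solution strictly below xs, contradicting minimality.

   Both claims are reduced to this property by the modulus trick for nonnegative matrices: if
   C z = l M z with |l| > 1, or (P + C) z = l z with |l| > s, then u = |z| satisfies
   M u <= theta C u with theta = 1/|l|, resp. theta = s/|l|.  Hence rho(M^-1 C) <= 1 and
   rho(P + C) <= s, and the latter says that M - C = s I - (P + C) is an M-matrix. *)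

text \<open>The library orders vectors componentwise (vectors of different dimension are incomparable);
  the following facts translate between this order and the entries.\<close>
lemma vec_le_iff:
  fixes v w :: "'a::ord vec"
  assumes "v \<in> carrier_vec n" "w \<in> carrier_vec n"
  shows "v \<le> w \<longleftrightarrow> (\<forall>i<n. v $ i \<le> w $ i)"
  using assms by (auto simp: less_eq_vec_def)

lemma vec_leI:
  fixes v w :: "'a::ord vec"
  assumes "v \<in> carrier_vec n" "w \<in> carrier_vec n" "\<And>i. i < n \<Longrightarrow> v $ i \<le> w $ i"
  shows "v \<le> w"
  using assms by (auto simp: less_eq_vec_def)

lemma vec_leD:
  fixes v w :: "'a::ord vec"
  assumes "v \<le> w" "i < dim_vec w"
  shows "v $ i \<le> w $ i"
  using assms by (auto simp: less_eq_vec_def)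

lemma nonneg_vec_le: "v \<in> carrier_vec n \<Longrightarrow> nonneg_vec v \<longleftrightarrow> 0\<^sub>v n \<le> v"
  by (auto simp: nonneg_vec_def less_eq_vec_def)

lemma mult_mat_vec_index:
  assumes "A \<in> carrier_mat n m" "v \<in> carrier_vec m" "i < n"
  shows "(A *\<^sub>v v) $ i = (\<Sum>j<m. A $$ (i,j) * v $ j)"
  using assms by (simp add: scalar_prod_def atLeast0LessThan)

lemma shifted_identity_mult_vec:
  fixes s :: "'a::comm_ring_1"
  assumes P: "P \<in> carrier_mat n n" and v: "v \<in> carrier_vec n"
  shows "(s \<cdot>\<^sub>m 1\<^sub>m n - P) *\<^sub>v v = s \<cdot>\<^sub>v v - P *\<^sub>v v"
proof -
  have "(\<Sum>j = 0..<n. s * (if j = i then 1 else 0) * v $ j) = s * v $ i" if "i < n" for i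
  proof -
    have "(\<Sum>j = 0..<n. s * (if j = i then 1 else 0) * v $ j) = (\<Sum>j = 0..<n. if j = i then s * v $ j else 0)"
      by (rule sum.cong) auto
    then show ?thesis using that by simp
  qed
  then have "s \<cdot>\<^sub>m 1\<^sub>m n *\<^sub>v v = s \<cdot>\<^sub>v v" using v by (intro eq_vecI) (auto simp: scalar_prod_def)
  then show ?thesis using P v by (simp add: minus_mult_distrib_mat_vec[of _ n n])
qed

lemma nonneg_mat_mult_vec_mono:
  assumes P: "P \<in> carrier_mat n n" "nonneg_mat P" and vw: "v \<le> w" "w \<in> carrier_vec n"
  shows "P *\<^sub>v v \<le> P *\<^sub>v w"
proof -
  have v: "v \<in> carrier_vec n" using vw by (auto simp: less_eq_vec_def)
  have "(P *\<^sub>v v) $ i \<le> (P *\<^sub>v w) $ i" if "i < n" for i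
    using P vw v that unfolding nonneg_mat_def vec_le_iff[OF v vw(2)]
    by (subst (1 2) mult_mat_vec_index[of _ n n]) (auto intro!: sum_mono mult_left_mono)
  then show ?thesis using P v vw(2) by (subst vec_le_iff[of _ n]) auto
qed

lemma pos_vec_dominates:
  assumes x: "x \<in> carrier_vec n" "pos_vec x" and u: "u \<in> carrier_vec n" "0\<^sub>v n \<le> u"
  shows "\<exists>c>0. c \<cdot>\<^sub>v u \<le> x"
proof -
  define c where "c = Min (insert 1 ((\<lambda>i. x $ i / (u $ i + 1)) ` {..<n}))"
  have u_nonneg: "0 \<le> u $ i" if "i < n" for i using vec_leD[OF u(2)] that u(1) by simp
  have x_pos: "0 < x $ i" if "i < n" for i using x that unfolding pos_vec_def by simp
  have "c > 0" unfolding c_def using x_pos u_nonneg by (auto intro!: divide_pos_pos add_nonneg_pos)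
  moreover have "c * u $ i \<le> x $ i" if i: "i < n" for i
  proof -
    have "c \<le> x $ i / (u $ i + 1)" unfolding c_def using i by (intro Min_le) auto
    then have "c * (u $ i + 1) \<le> x $ i" using u_nonneg[OF i] by (simp add: pos_le_divide_eq add_nonneg_pos)
    then show ?thesis using \<open>c > 0\<close> by (simp add: algebra_simps)
  qed
  ultimately show ?thesis using x(1) u(1) by (intro exI[of _ c]) (auto intro!: vec_leI[of _ n])
qed

context
  fixes n :: nat and b :: "real vec \<Rightarrow> real vec \<Rightarrow> real vec"
  assumes b: "bilinear_vec n b"
begin

lemma bilinear_carrier:
  "x \<in> carrier_vec n \<Longrightarrow> y \<in> carrier_vec n \<Longrightarrow> b x y \<in> carrier_vec n"
  using b unfolding bilinear_vec_def by blast

lemma bilinear_dim: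
  "x \<in> carrier_vec n \<Longrightarrow> y \<in> carrier_vec n \<Longrightarrow> dim_vec (b x y) = n"
  using bilinear_carrier carrier_vecD by blast

lemma bilinear_add_left:
  "x \<in> carrier_vec n \<Longrightarrow> y \<in> carrier_vec n \<Longrightarrow> z \<in> carrier_vec n \<Longrightarrow> b (x + y) z = b x z + b y z"
  using b unfolding bilinear_vec_def by blast

lemma bilinear_add_right:
  "x \<in> carrier_vec n \<Longrightarrow> y \<in> carrier_vec n \<Longrightarrow> z \<in> carrier_vec n \<Longrightarrow> b z (x + y) = b z x + b z y"
  using b unfolding bilinear_vec_def by blast

lemma bilinear_smult_left:
  "x \<in> carrier_vec n \<Longrightarrow> z \<in> carrier_vec n \<Longrightarrow> b (c \<cdot>\<^sub>v x) z = c \<cdot>\<^sub>v b x z"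
  using b unfolding bilinear_vec_def by blast

lemma bilinear_smult_right:
  "x \<in> carrier_vec n \<Longrightarrow> z \<in> carrier_vec n \<Longrightarrow> b z (c \<cdot>\<^sub>v x) = c \<cdot>\<^sub>v b z x"
  using b unfolding bilinear_vec_def by blast

lemma bilinear_zero_right:
  assumes x: "x \<in> carrier_vec n"
  shows "b x (0\<^sub>v n) = 0\<^sub>v n"
proof -
  have "0\<^sub>v n = 0 \<cdot>\<^sub>v (0\<^sub>v n :: real vec)" by (intro eq_vecI) auto
  then have "b x (0\<^sub>v n) = b x (0 \<cdot>\<^sub>v 0\<^sub>v n)" by simp
  also have "\<dots> = 0 \<cdot>\<^sub>v b x (0\<^sub>v n)" using bilinear_smult_right[OF _ x] by simp
  also have "\<dots> = 0\<^sub>v n" using bilinear_carrier[OF x zero_carrier_vec] by (intro eq_vecI) auto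
  finally show ?thesis .
qed

lemma bilinear_expand:
  assumes "x \<in> carrier_vec n" "d \<in> carrier_vec n"
  shows "b (x + d) (x + d) = b x x + b x d + (b d x + b d d)"
proof -
  have "b (x + d) (x + d) = b x (x + d) + b d (x + d)"
    using assms by (simp add: bilinear_add_left)
  also have "\<dots> = b x x + b x d + (b d x + b d d)"
    using assms by (simp add: bilinear_add_right)
  finally show ?thesis .
qed

lemma bilinear_along_line:
  assumes x: "x \<in> carrier_vec n" and u: "u \<in> carrier_vec n"
  shows "b (x + t \<cdot>\<^sub>v u) (x + t \<cdot>\<^sub>v u) = b x x + t \<cdot>\<^sub>v (b x u + b u x) + (t * t) \<cdot>\<^sub>v b u u"
proof -
  have "b (x + t \<cdot>\<^sub>v u) (x + t \<cdot>\<^sub>v u) = b x x + t \<cdot>\<^sub>v b x u + (t \<cdot>\<^sub>v b u x + (t * t) \<cdot>\<^sub>v b u u)"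
    using assms by (simp add: bilinear_expand bilinear_smult_left bilinear_smult_right smult_smult_assoc)
  then show ?thesis
    using assms by (intro eq_vecI) (auto simp: bilinear_dim algebra_simps)
qed

text \<open>The matrix b_left n b x represents u \<mapsto> b(x, u).  By linearity in the second argument,
  b(x, u) is computed coordinate by coordinate on the truncations of u to its first k entries.\<close>
lemma b_left_mult_vec:
  assumes x: "x \<in> carrier_vec n" and u: "u \<in> carrier_vec n"
  shows "b_left n b x *\<^sub>v u = b x u"
proof -
  define trunc where "trunc k = vec n (\<lambda>i. if i < k then u $ i else 0)" for k
  have trunc_carrier: "trunc k \<in> carrier_vec n" for k unfolding trunc_def by simp
  have partial: "b x (trunc k) = vec n (\<lambda>i. \<Sum>j<k. u $ j * b x (unit_vec n j) $ i)" if "k \<le> n" for k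
    using that
  proof (induction k)
    case 0
    have "trunc 0 = 0\<^sub>v n" unfolding trunc_def by (intro eq_vecI) auto
    then show ?case using bilinear_zero_right[OF x] by (intro eq_vecI) auto
  next
    case (Suc k)
    have "trunc (Suc k) = trunc k + (u $ k) \<cdot>\<^sub>v unit_vec n k"
      unfolding trunc_def using Suc.prems by (intro eq_vecI) (auto simp: unit_vec_def less_Suc_eq)
    then have "b x (trunc (Suc k)) = b x (trunc k) + (u $ k) \<cdot>\<^sub>v b x (unit_vec n k)"
      using x trunc_carrier by (simp add: bilinear_add_right bilinear_smult_right)
    then show ?case using Suc.IH[OF Suc_leD[OF Suc.prems]] x by (intro eq_vecI) (auto simp: algebra_simps bilinear_dim)
  qed
  have "trunc n = u" unfolding trunc_def using u by (intro eq_vecI) auto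
  with partial[of n] have "b x u = vec n (\<lambda>i. \<Sum>j<n. u $ j * b x (unit_vec n j) $ i)" by simp
  moreover have "b_left n b x *\<^sub>v u = vec n (\<lambda>i. \<Sum>j<n. u $ j * b x (unit_vec n j) $ i)"
    unfolding b_left_def using u
    by (intro eq_vecI) (auto simp: scalar_prod_def atLeast0LessThan mult.commute)
  ultimately show ?thesis by simp
qed

end

text \<open>b_right n b x is b_left for the flipped map, so it represents u \<mapsto> b(u, x).\<close>
lemma bilinear_vec_flip:
  "bilinear_vec n b \<Longrightarrow> bilinear_vec n (\<lambda>x y. b y x)"
  unfolding bilinear_vec_def by simp

lemma b_right_mult_vec:
  assumes "bilinear_vec n b" "x \<in> carrier_vec n" "u \<in> carrier_vec n"
  shows "b_right n b x *\<^sub>v u = b u x"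
proof -
  have "b_right n b x = b_left n (\<lambda>x y. b y x) x"
    unfolding b_right_def b_left_def ..
  then show ?thesis using b_left_mult_vec[OF bilinear_vec_flip[OF assms(1)] assms(2,3)] by simp
qed

definition cmod_vec :: "complex vec \<Rightarrow> real vec" where
  "cmod_vec z = vec (dim_vec z) (\<lambda>j. cmod (z $ j))"

lemma cmod_vec_carrier: "z \<in> carrier_vec n \<Longrightarrow> cmod_vec z \<in> carrier_vec n"
  unfolding cmod_vec_def by simp

lemma cmod_vec_index [simp]: "j < dim_vec z \<Longrightarrow> cmod_vec z $ j = cmod (z $ j)"
  unfolding cmod_vec_def by simp

lemma cmod_vec_nonneg: "z \<in> carrier_vec n \<Longrightarrow> 0\<^sub>v n \<le> cmod_vec z"
  unfolding cmod_vec_def less_eq_vec_def by simp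

lemma cmod_vec_nonzero:
  assumes "z \<in> carrier_vec n" "z \<noteq> 0\<^sub>v n"
  shows "cmod_vec z \<noteq> 0\<^sub>v n"
proof -
  obtain j where "j < n" "z $ j \<noteq> 0"
    using assms by (metis carrier_vecD eq_vecI index_zero_vec(1,2))
  then have "cmod_vec z $ j \<noteq> 0\<^sub>v n $ j" using assms by simp
  then show ?thesis by auto
qed

lemma cmod_mult_vec_le:
  assumes Q: "Q \<in> carrier_mat n n" "nonneg_mat Q" and z: "z \<in> carrier_vec n" and i: "i < n"
  shows "cmod ((map_mat complex_of_real Q *\<^sub>v z) $ i) \<le> (Q *\<^sub>v cmod_vec z) $ i"
proof -
  have "cmod ((map_mat complex_of_real Q *\<^sub>v z) $ i) = cmod (\<Sum>j<n. complex_of_real (Q $$ (i,j)) * z $ j)"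
    using Q z i by (subst mult_mat_vec_index[of _ n n]) auto
  also have "\<dots> \<le> (\<Sum>j<n. cmod (complex_of_real (Q $$ (i,j)) * z $ j))"
    by (rule norm_sum)
  also have "\<dots> = (\<Sum>j<n. Q $$ (i,j) * cmod (z $ j))"
    using Q i unfolding nonneg_mat_def by (intro sum.cong) (auto simp: norm_mult)
  also have "\<dots> = (Q *\<^sub>v cmod_vec z) $ i"
    using Q z i by (subst mult_mat_vec_index[of _ n n]) (auto simp: cmod_vec_carrier)
  finally show ?thesis .
qed

lemma rho_le_eigenvalue_bound:
  assumes A: "A \<in> carrier_mat n n" and n: "n > 0"
    and bound: "\<And>z l. eigenvector (map_mat complex_of_real A) z l \<Longrightarrow> cmod l \<le> c"
  shows "rho A \<le> c"
proof -
  have "map_mat complex_of_real A \<in> carrier_mat n n" using A by simp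
  from spectral_radius_mem_max(1)[OF this n] obtain l where
    "l \<in> spectrum (map_mat complex_of_real A)" and "rho A = cmod l"
    unfolding rho_def by auto
  then show ?thesis
    using bound unfolding spectrum_def eigenvalue_def by auto
qed

text \<open>A monotone self-map of the nonnegative orthant that maps some y \<ge> 0 below itself
  has a fixed point in the box [0, y] (Knaster--Tarski, via the componentwise infimum of
  all w in [0, y] with H w \<le> w).\<close>
lemma monotone_fixpoint_below:
  fixes H :: "real vec \<Rightarrow> real vec"
  assumes y: "y \<in> carrier_vec n" "0\<^sub>v n \<le> y" "H y \<le> y"
    and H_nonneg: "\<And>x. x \<in> carrier_vec n \<Longrightarrow> 0\<^sub>v n \<le> x \<Longrightarrow> H x \<in> carrier_vec n \<and> 0\<^sub>v n \<le> H x"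
    and H_mono: "\<And>x x'. x \<in> carrier_vec n \<Longrightarrow> 0\<^sub>v n \<le> x \<Longrightarrow> x \<le> x' \<Longrightarrow> H x \<le> H x'"
  shows "\<exists>z \<in> carrier_vec n. 0\<^sub>v n \<le> z \<and> z \<le> y \<and> H z = z"
proof -
  define S where "S = {w \<in> carrier_vec n. 0\<^sub>v n \<le> w \<and> w \<le> y \<and> H w \<le> w}"
  define z where "z = vec n (\<lambda>i. Inf ((\<lambda>w. w $ i) ` S))"
  have "y \<in> S" unfolding S_def using y by auto
  have S_carrier: "w \<in> carrier_vec n" if "w \<in> S" for w using that unfolding S_def by auto
  have z_carrier: "z \<in> carrier_vec n" unfolding z_def by simp
  have z_lower: "z \<le> w" if "w \<in> S" for w
  proof -
    have "bdd_below ((\<lambda>w. w $ i) ` S)" if "i < n" for i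
      using that by (intro bdd_belowI[of _ 0]) (auto simp: S_def less_eq_vec_def)
    then show ?thesis using that S_carrier z_carrier
      unfolding z_def by (subst vec_le_iff[of _ n]) (auto intro: cInf_lower)
  qed
  have z_greatest: "v \<le> z" if "v \<in> carrier_vec n" "\<And>w. w \<in> S \<Longrightarrow> v \<le> w" for v
    using that \<open>y \<in> S\<close> S_carrier unfolding z_def
    by (subst vec_le_iff[of _ n]) (auto simp: vec_le_iff intro!: cInf_greatest)
  have z_nonneg: "0\<^sub>v n \<le> z" by (rule z_greatest) (auto simp: S_def)
  have "z \<le> y" using z_lower \<open>y \<in> S\<close> .
  have Hz: "H z \<in> carrier_vec n" "0\<^sub>v n \<le> H z" using H_nonneg[OF z_carrier z_nonneg] by auto
  have "H z \<le> z"
  proof (rule z_greatest[OF Hz(1)])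
    fix w assume "w \<in> S"
    then have "H z \<le> H w" using H_mono[OF z_carrier z_nonneg z_lower] by blast
    also have "H w \<le> w" using \<open>w \<in> S\<close> unfolding S_def by blast
    finally show "H z \<le> w" .
  qed
  then have "H z \<in> S"
    unfolding S_def using Hz H_mono[OF Hz(1,2)] \<open>z \<le> y\<close> by (auto intro: order_trans)
  then have "z \<le> H z" using z_lower by blast
  then have "H z = z" using \<open>H z \<le> z\<close> by (rule antisym[rotated])
  then show ?thesis using z_carrier z_nonneg \<open>z \<le> y\<close> by blast
qed

lemma minv_inverse:
  assumes M: "M \<in> carrier_mat n n" and inv: "invertible_mat M"
  shows "minv M \<in> carrier_mat n n" "M * minv M = 1\<^sub>m n" "minv M * M = 1\<^sub>m n"
proof -
  have "\<exists>B. inverts_mat M B \<and> inverts_mat B M" using inv unfolding invertible_mat_def by auto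
  then have "inverts_mat M (minv M) \<and> inverts_mat (minv M) M"
    unfolding minv_def by (rule someI_ex)
  then have right: "M * minv M = 1\<^sub>m n" and left: "minv M * M = 1\<^sub>m (dim_row (minv M))"
    using M unfolding inverts_mat_def by auto
  from right have "dim_col (minv M) = n" by (metis index_mult_mat(3) index_one_mat(3))
  moreover from left M have "dim_row (minv M) = n" by (metis carrier_matD(2) index_mult_mat(3) index_one_mat(3))
  ultimately show "minv M \<in> carrier_mat n n" by auto
  show "M * minv M = 1\<^sub>m n" by (fact right)
  show "minv M * M = 1\<^sub>m n" using left \<open>dim_row (minv M) = n\<close> by simp
qed

locale quadratic_vector_equation =
  fixes n :: nat and M :: "real mat" and s :: real and P :: "real mat"
    and a :: "real vec" and b :: "real vec \<Rightarrow> real vec \<Rightarrow> real vec"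
  assumes M_split: "M = s \<cdot>\<^sub>m 1\<^sub>m n - P"
    and P_carrier: "P \<in> carrier_mat n n" and P_nonneg: "nonneg_mat P"
    and a_carrier: "a \<in> carrier_vec n" and a_nonneg: "nonneg_vec a"
    and bilinear: "bilinear_vec n b"
    and b_nonneg: "\<And>x y. x \<in> carrier_vec n \<Longrightarrow> y \<in> carrier_vec n \<Longrightarrow>
                     nonneg_vec x \<Longrightarrow> nonneg_vec y \<Longrightarrow> nonneg_vec (b x y)"
begin

lemmas b_carrier [simp] = bilinear_carrier[OF bilinear]
lemmas b_dim [simp] = bilinear_dim[OF bilinear]

lemma M_carrier: "M \<in> carrier_mat n n"
  using P_carrier unfolding M_split by (simp add: minus_carrier_mat)

lemma M_mult_vec: "v \<in> carrier_vec n \<Longrightarrow> M *\<^sub>v v = s \<cdot>\<^sub>v v - P *\<^sub>v v"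
  unfolding M_split using P_carrier by (rule shifted_identity_mult_vec)

lemma b_nonneg_le:
  assumes "x \<in> carrier_vec n" "y \<in> carrier_vec n" "0\<^sub>v n \<le> x" "0\<^sub>v n \<le> y"
  shows "0\<^sub>v n \<le> b x y"
  using b_nonneg[OF assms(1,2)] assms nonneg_vec_le[of x n] nonneg_vec_le[of y n]
    nonneg_vec_le[of "b x y" n] by simp

lemma P_mult_nonneg: "v \<in> carrier_vec n \<Longrightarrow> 0\<^sub>v n \<le> v \<Longrightarrow> 0\<^sub>v n \<le> P *\<^sub>v v"
proof -
  assume "v \<in> carrier_vec n" "0\<^sub>v n \<le> v"
  then have "P *\<^sub>v 0\<^sub>v n \<le> P *\<^sub>v v" using nonneg_mat_mult_vec_mono[OF P_carrier P_nonneg] by blast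
  moreover have "P *\<^sub>v 0\<^sub>v n = 0\<^sub>v n" using P_carrier by auto
  ultimately show ?thesis by simp
qed

lemma b_diag_mono:
  assumes x: "x \<in> carrier_vec n" "0\<^sub>v n \<le> x" and le: "x \<le> x'"
  shows "b x x \<le> b x' x'"
proof -
  have x': "x' \<in> carrier_vec n" using x le by (auto simp: less_eq_vec_def)
  define d where "d = x' - x"
  have d: "d \<in> carrier_vec n" "0\<^sub>v n \<le> d"
    unfolding d_def using x x' le by (auto simp: less_eq_vec_def)
  have "x' = x + d" unfolding d_def using x x' by (intro eq_vecI) auto
  then have expand: "b x' x' = b x x + b x d + (b d x + b d d)"
    using bilinear_expand[OF bilinear x(1) d(1)] by simp
  have "0\<^sub>v n \<le> b x d" "0\<^sub>v n \<le> b d x" "0\<^sub>v n \<le> b d d"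
    using b_nonneg_le x d by auto
  then have "0 \<le> b x d $ i" "0 \<le> b d x $ i" "0 \<le> b d d $ i" if "i < n" for i
    using that x d by (auto dest!: vec_leD[where i = i])
  then show ?thesis
    using x(1) x' d(1) unfolding expand
    by (intro vec_leI[of _ n]) auto
qed

text \<open>Splitting M = s I - P turns the equation into the fixed-point problem for this map.\<close>
definition splitting_map :: "real vec \<Rightarrow> real vec" where
  "splitting_map x = (1 / s) \<cdot>\<^sub>v (a + P *\<^sub>v x + b x x)"

lemma splitting_map_index:
  "x \<in> carrier_vec n \<Longrightarrow> i < n \<Longrightarrow> splitting_map x $ i = (a $ i + (P *\<^sub>v x) $ i + b x x $ i) / s"
  unfolding splitting_map_def using a_carrier P_carrier by simp

lemma solution_below_supersolution:
  assumes s: "s > 0" and y: "y \<in> carrier_vec n" "0\<^sub>v n \<le> y" "a + b y y \<le> M *\<^sub>v y"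
  shows "\<exists>z. qve_solution n M a b z \<and> z \<le> y"
proof -
  let ?H = splitting_map
  have H_carrier: "?H x \<in> carrier_vec n" if "x \<in> carrier_vec n" for x
    unfolding splitting_map_def using that a_carrier P_carrier b_carrier by auto
  have H_nonneg: "?H x \<in> carrier_vec n \<and> 0\<^sub>v n \<le> ?H x"
    if x: "x \<in> carrier_vec n" "0\<^sub>v n \<le> x" for x
  proof -
    have "0 \<le> a $ i + (P *\<^sub>v x) $ i + b x x $ i" if "i < n" for i
      using that a_nonneg P_mult_nonneg[OF x] b_nonneg_le[OF x(1) x(1) x(2) x(2)] a_carrier
      unfolding nonneg_vec_def less_eq_vec_def by auto
    then show ?thesis
      using x H_carrier[OF x(1)] s by (auto intro!: vec_leI[of _ n] simp: splitting_map_index)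
  qed
  have H_mono: "?H x \<le> ?H x'" if x: "x \<in> carrier_vec n" "0\<^sub>v n \<le> x" and le: "x \<le> x'" for x x'
  proof -
    have x': "x' \<in> carrier_vec n" using x le by (auto simp: less_eq_vec_def)
    have "P *\<^sub>v x \<le> P *\<^sub>v x'" by (rule nonneg_mat_mult_vec_mono[OF P_carrier P_nonneg le x'])
    moreover have "b x x \<le> b x' x'" by (rule b_diag_mono[OF x le])
    ultimately have "(P *\<^sub>v x) $ i \<le> (P *\<^sub>v x') $ i" "b x x $ i \<le> b x' x' $ i" if "i < n" for i
      using that P_carrier x' vec_leD[OF \<open>P *\<^sub>v x \<le> P *\<^sub>v x'\<close>] vec_leD[OF \<open>b x x \<le> b x' x'\<close>]
      by auto
    then show ?thesis
      using x(1) x' s by (intro vec_leI[OF H_carrier H_carrier]) (auto simp: splitting_map_index intro!: divide_right_mono add_mono)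
  qed
  have "?H y \<le> y"
  proof -
    have "a $ i + (P *\<^sub>v y) $ i + b y y $ i \<le> s * y $ i" if "i < n" for i
      using vec_leD[OF y(3), of i] that y(1) a_carrier P_carrier M_mult_vec[OF y(1)]
      by simp
    then show ?thesis
      using y(1) s by (intro vec_leI[OF H_carrier]) (auto simp: splitting_map_index divide_le_eq mult.commute)
  qed
  then obtain z where z: "z \<in> carrier_vec n" "0\<^sub>v n \<le> z" "z \<le> y" "?H z = z"
    using monotone_fixpoint_below[of y n ?H, OF y(1,2) _ H_nonneg H_mono] by blast
  have "M *\<^sub>v z = a + b z z"
  proof (rule eq_vecI)
    fix i assume "i < dim_vec (a + b z z)"
    then have i: "i < n" using a_carrier bilinear_dim[OF bilinear z(1) z(1)] by simp
    have "z $ i = (a $ i + (P *\<^sub>v z) $ i + b z z $ i) / s" using z(4) splitting_map_index[OF z(1) i] by simp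
    then show "(M *\<^sub>v z) $ i = (a + b z z) $ i"
      using s i z(1) a_carrier P_carrier M_mult_vec[OF z(1)] by (simp add: field_simps)
  qed (use a_carrier M_carrier z(1) in simp)
  then have "qve_solution n M a b z" unfolding qve_solution_def using z nonneg_vec_le by auto
  with z(3) show ?thesis by blast
qed

lemma defect_along_line:
  assumes xs: "xs \<in> carrier_vec n" "M *\<^sub>v xs = a + b xs xs" and u: "u \<in> carrier_vec n" and i: "i < n"
  shows "(M *\<^sub>v (xs - t \<cdot>\<^sub>v u)) $ i - (a $ i + b (xs - t \<cdot>\<^sub>v u) (xs - t \<cdot>\<^sub>v u) $ i)
         = t * ((b xs u + b u xs) $ i - (M *\<^sub>v u) $ i) - t * t * b u u $ i"
proof -
  have shift: "xs - t \<cdot>\<^sub>v u = xs + (- t) \<cdot>\<^sub>v u" using xs(1) u by (intro eq_vecI) auto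
  have "b (xs - t \<cdot>\<^sub>v u) (xs - t \<cdot>\<^sub>v u) $ i = b xs xs $ i - t * (b xs u + b u xs) $ i + t * t * b u u $ i"
    unfolding shift using bilinear_along_line[OF bilinear xs(1) u, of "- t"] i xs(1) u by simp
  moreover have "(M *\<^sub>v (xs - t \<cdot>\<^sub>v u)) $ i = (M *\<^sub>v xs) $ i - t * (M *\<^sub>v u) $ i"
    unfolding shift using M_carrier xs(1) u i
    by (simp add: mult_add_distrib_mat_vec[of _ n n] mult_mat_vec[of _ n n])
  ultimately show ?thesis using xs i a_carrier by (simp add: algebra_simps)
qed

text \<open>If c u \<le> x with u \<ge> 0, then c b(u, u) \<le> b(x, u), by positivity of b(x - c u, u).\<close>
lemma b_scaled_le:
  assumes x: "x \<in> carrier_vec n" and u: "u \<in> carrier_vec n" "0\<^sub>v n \<le> u"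
    and below: "c \<cdot>\<^sub>v u \<le> x" and i: "i < n"
  shows "c * b u u $ i \<le> b x u $ i"
proof -
  have "0\<^sub>v n \<le> x - c \<cdot>\<^sub>v u"
    using vec_leD[OF below] x u(1) by (intro vec_leI[of _ n]) auto
  then have "0\<^sub>v n \<le> b (x - c \<cdot>\<^sub>v u) u" using x u by (intro b_nonneg_le) auto
  moreover have "x - c \<cdot>\<^sub>v u = x + (- c) \<cdot>\<^sub>v u" using x u(1) by (intro eq_vecI) auto
  ultimately have "0\<^sub>v n \<le> b x u + (- c) \<cdot>\<^sub>v b u u"
    using x u(1) by (simp add: bilinear_add_left[OF bilinear] bilinear_smult_left[OF bilinear])
  then show ?thesis using vec_leD[of _ _ i] i x u(1) by fastforce
qed

text \<open>Moving from a positive solution xs in a direction u along which M u is dominated by a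
  fraction \<theta> < 1 of the linearised quadratic term yields a nonnegative supersolution:
  with c u \<le> xs and t = (1 - \<theta>) c the quadratic term of the defect is absorbed.\<close>
lemma descent_supersolution:
  assumes xs: "xs \<in> carrier_vec n" "pos_vec xs" "M *\<^sub>v xs = a + b xs xs"
    and u: "u \<in> carrier_vec n" "0\<^sub>v n \<le> u"
    and \<theta>: "0 \<le> \<theta>" "\<theta> < 1"
    and direction: "M *\<^sub>v u \<le> \<theta> \<cdot>\<^sub>v (b xs u + b u xs)"
  shows "\<exists>t>0. 0\<^sub>v n \<le> xs - t \<cdot>\<^sub>v u \<and>
           a + b (xs - t \<cdot>\<^sub>v u) (xs - t \<cdot>\<^sub>v u) \<le> M *\<^sub>v (xs - t \<cdot>\<^sub>v u)"
proof -
  obtain c where c: "c > 0" "c \<cdot>\<^sub>v u \<le> xs" using pos_vec_dominates[OF xs(1,2) u] by blast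
  define t where "t = (1 - \<theta>) * c"
  have t: "0 < t" "t \<le> c" unfolding t_def using c(1) \<theta> by (auto simp: mult_le_cancel_right1)
  have xs_nonneg: "0\<^sub>v n \<le> xs"
    using xs(1,2) unfolding pos_vec_def by (intro vec_leI[of _ n]) (auto simp: less_imp_le)
  have defect_nonneg: "0 \<le> t * ((b xs u + b u xs) $ i - (M *\<^sub>v u) $ i) - t * t * b u u $ i"
    if i: "i < n" for i
  proof -
    define L where "L = (b xs u + b u xs) $ i"
    have "(M *\<^sub>v u) $ i \<le> \<theta> * L" unfolding L_def using vec_leD[OF direction, of i] i xs(1) u(1) by simp
    have "0 \<le> b u xs $ i"
      using vec_leD[OF b_nonneg_le[OF u(1) xs(1) u(2) xs_nonneg], of i] i xs(1) u(1) by simp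
    have "t * b u u $ i = (1 - \<theta>) * (c * b u u $ i)" unfolding t_def by simp
    also have "\<dots> \<le> (1 - \<theta>) * b xs u $ i"
      using b_scaled_le[OF xs(1) u c(2) i] \<theta> by (intro mult_left_mono) auto
    also have "\<dots> \<le> (1 - \<theta>) * L"
      unfolding L_def using \<open>0 \<le> b u xs $ i\<close> \<theta> i xs(1) u(1) by (intro mult_left_mono) auto
    also have "\<dots> \<le> L - (M *\<^sub>v u) $ i" using \<open>(M *\<^sub>v u) $ i \<le> \<theta> * L\<close> by (simp add: left_diff_distrib)
    finally have "t * (t * b u u $ i) \<le> t * (L - (M *\<^sub>v u) $ i)" using t(1) by (simp add: mult_left_mono)
    then show ?thesis unfolding L_def by (simp add: algebra_simps)
  qed
  have "a + b (xs - t \<cdot>\<^sub>v u) (xs - t \<cdot>\<^sub>v u) \<le> M *\<^sub>v (xs - t \<cdot>\<^sub>v u)"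
  proof (intro vec_leI[of _ n])
    fix i assume i: "i < n"
    have "(a + b (xs - t \<cdot>\<^sub>v u) (xs - t \<cdot>\<^sub>v u)) $ i = a $ i + b (xs - t \<cdot>\<^sub>v u) (xs - t \<cdot>\<^sub>v u) $ i"
      using i a_carrier xs(1) u(1) by simp
    then show "(a + b (xs - t \<cdot>\<^sub>v u) (xs - t \<cdot>\<^sub>v u)) $ i \<le> (M *\<^sub>v (xs - t \<cdot>\<^sub>v u)) $ i"
      using defect_along_line[OF xs(1,3) u(1) i, of t] defect_nonneg[OF i] by linarith
  qed (use xs(1) u(1) a_carrier M_carrier in auto)
  moreover have "0\<^sub>v n \<le> xs - t \<cdot>\<^sub>v u"
  proof (intro vec_leI[of _ n])
    fix i assume i: "i < n"
    have "t * u $ i \<le> c * u $ i" using t(2) vec_leD[OF u(2), of i] i u(1) by (simp add: mult_right_mono)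
    then show "0\<^sub>v n $ i \<le> (xs - t \<cdot>\<^sub>v u) $ i" using vec_leD[OF c(2), of i] i xs(1) u(1) by simp
  qed (use xs(1) u(1) in auto)
  ultimately show ?thesis using t(1) by blast
qed

end

locale qve_positive_minimal_solution = quadratic_vector_equation +
  fixes xs :: "real vec"
  assumes dim_pos: "n > 0"
    and nonsingular: "invertible_mat M"
    and minimal: "qve_minimal_solution n M a b xs"
    and positive: "pos_vec xs"
begin

lemma xs_carrier: "xs \<in> carrier_vec n"
  and xs_equation: "M *\<^sub>v xs = a + b xs xs"
  and xs_below: "qve_solution n M a b y \<Longrightarrow> xs \<le> y"
  using minimal unfolding qve_minimal_solution_def qve_solution_def by (auto simp: less_eq_vec_def)

lemma xs_nonneg: "0\<^sub>v n \<le> xs"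
  using xs_carrier positive unfolding pos_vec_def by (intro vec_leI[of _ n]) (auto simp: less_imp_le)

text \<open>The shift s is positive: otherwise M xs \<le> 0 \<le> a + b(xs, xs) forces M xs = 0 with xs \<noteq> 0.\<close>
lemma s_pos: "s > 0"
proof (rule ccontr)
  assume "\<not> s > 0"
  have "(M *\<^sub>v xs) $ i = 0" if i: "i < n" for i
  proof -
    have "0 \<le> (a + b xs xs) $ i"
      using a_nonneg vec_leD[OF b_nonneg_le[OF xs_carrier xs_carrier xs_nonneg xs_nonneg], of i]
        i a_carrier xs_carrier
      unfolding nonneg_vec_def by simp
    moreover have "0 \<le> (P *\<^sub>v xs) $ i" "0 \<le> xs $ i"
      using vec_leD[OF P_mult_nonneg[OF xs_carrier xs_nonneg], of i] vec_leD[OF xs_nonneg, of i]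
        i P_carrier xs_carrier by auto
    moreover have "s * xs $ i \<le> 0" using \<open>\<not> s > 0\<close> \<open>0 \<le> xs $ i\<close> by (simp add: mult_nonpos_nonneg)
    moreover have "(M *\<^sub>v xs) $ i = s * xs $ i - (P *\<^sub>v xs) $ i"
      using M_mult_vec[OF xs_carrier] i P_carrier xs_carrier by simp
    ultimately show ?thesis using xs_equation by simp
  qed
  then have "M *\<^sub>v xs = 0\<^sub>v n" using M_carrier by (intro eq_vecI) auto
  note inverse = minv_inverse[OF M_carrier nonsingular]
  have "xs = (minv M * M) *\<^sub>v xs" using inverse(3) xs_carrier by simp
  also have "\<dots> = minv M *\<^sub>v (M *\<^sub>v xs)" using inverse(1) M_carrier xs_carrier by (rule assoc_mult_mat_vec)
  also have "\<dots> = 0\<^sub>v n" using \<open>M *\<^sub>v xs = 0\<^sub>v n\<close> inverse(1) by auto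
  finally show False using positive dim_pos unfolding pos_vec_def by auto
qed

text \<open>Key consequence of minimality: no nonzero u \<ge> 0 satisfies M u \<le> \<theta> (b(xs,u) + b(u,xs))
  with \<theta> < 1, since moving from xs against u would produce a smaller solution.\<close>
lemma no_descent_direction:
  assumes u: "u \<in> carrier_vec n" "0\<^sub>v n \<le> u" and \<theta>: "0 \<le> \<theta>" "\<theta> < 1"
    and direction: "M *\<^sub>v u \<le> \<theta> \<cdot>\<^sub>v (b xs u + b u xs)"
  shows "u = 0\<^sub>v n"
proof -
  obtain t where t: "t > 0" "0\<^sub>v n \<le> xs - t \<cdot>\<^sub>v u"
      "a + b (xs - t \<cdot>\<^sub>v u) (xs - t \<cdot>\<^sub>v u) \<le> M *\<^sub>v (xs - t \<cdot>\<^sub>v u)"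
    using descent_supersolution[OF xs_carrier positive xs_equation u \<theta> direction] by blast
  moreover have "xs - t \<cdot>\<^sub>v u \<in> carrier_vec n" using xs_carrier u(1) by simp
  ultimately obtain z where "qve_solution n M a b z" "z \<le> xs - t \<cdot>\<^sub>v u"
    using solution_below_supersolution[OF s_pos] by blast
  then have "xs \<le> xs - t \<cdot>\<^sub>v u" using xs_below by (blast intro: order_trans)
  then have "t * u $ i \<le> 0" if "i < n" for i using vec_leD[of _ _ i] that xs_carrier u(1) by fastforce
  then have "u $ i = 0" if "i < n" for i
    using that t(1) vec_leD[OF u(2), of i] u(1) by (simp add: mult_le_0_iff) (meson antisym)
  then show ?thesis using u(1) by (intro eq_vecI) auto
qed

definition coupling :: "real mat" where
  "coupling = b_left n b xs + b_right n b xs"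

lemma coupling_carrier: "coupling \<in> carrier_mat n n"
  unfolding coupling_def b_left_def b_right_def by simp

lemma coupling_mult_vec: "u \<in> carrier_vec n \<Longrightarrow> coupling *\<^sub>v u = b xs u + b u xs"
proof -
  assume u: "u \<in> carrier_vec n"
  have "b_left n b xs \<in> carrier_mat n n" "b_right n b xs \<in> carrier_mat n n"
    unfolding b_left_def b_right_def by auto
  then show ?thesis unfolding coupling_def using xs_carrier u
    by (simp add: add_mult_distrib_mat_vec[of _ n n] b_left_mult_vec[OF bilinear] b_right_mult_vec[OF bilinear])
qed

lemma coupling_nonneg: "nonneg_mat coupling"
proof -
  have "0 \<le> b xs (unit_vec n j) $ i + b (unit_vec n j) xs $ i" if "i < n" "j < n" for i j
  proof -
    have e: "unit_vec n j \<in> carrier_vec n" "0\<^sub>v n \<le> (unit_vec n j :: real vec)"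
      by (auto intro!: vec_leI[of _ n] simp: unit_vec_def)
    show ?thesis
      using vec_leD[OF b_nonneg_le[OF xs_carrier e(1) xs_nonneg e(2)], of i]
        vec_leD[OF b_nonneg_le[OF e(1) xs_carrier e(2) xs_nonneg], of i] that xs_carrier by simp
  qed
  then show ?thesis unfolding nonneg_mat_def coupling_def b_left_def b_right_def by simp
qed

lemma no_dominated_modulus_vector:
  assumes z: "z \<in> carrier_vec n" "z \<noteq> 0\<^sub>v n" and \<theta>: "0 \<le> \<theta>" "\<theta> < 1"
    and dominated: "\<And>i. i < n \<Longrightarrow> (M *\<^sub>v cmod_vec z) $ i \<le> \<theta> * (coupling *\<^sub>v cmod_vec z) $ i"
  shows False
proof -
  have u: "cmod_vec z \<in> carrier_vec n" "0\<^sub>v n \<le> cmod_vec z"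
    using z(1) by (auto simp: cmod_vec_carrier cmod_vec_nonneg)
  have "M *\<^sub>v cmod_vec z \<le> \<theta> \<cdot>\<^sub>v (b xs (cmod_vec z) + b (cmod_vec z) xs)"
    using dominated u(1) M_carrier coupling_carrier xs_carrier
    by (intro vec_leI[of _ n]) (auto simp: coupling_mult_vec[symmetric])
  then show False using no_descent_direction[OF u \<theta>] cmod_vec_nonzero[OF z] by blast
qed

text \<open>Spectral bound for the nonnegative matrix P + coupling: an eigenvalue l with |l| > s would
  make the modulus of its eigenvector a dominated direction with \<theta> = s / |l|.\<close>
lemma rho_P_plus_coupling_le: "rho (P + coupling) \<le> s"
proof (rule rho_le_eigenvalue_bound[OF _ dim_pos])
  let ?Q = "P + coupling"
  show Q: "?Q \<in> carrier_mat n n" using P_carrier coupling_carrier by simp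
  have Q_nonneg: "nonneg_mat ?Q"
    using P_nonneg coupling_nonneg P_carrier coupling_carrier unfolding nonneg_mat_def by auto
  fix z l assume "eigenvector (map_mat complex_of_real ?Q) z l"
  then have z: "z \<in> carrier_vec n" "z \<noteq> 0\<^sub>v n" and eigen: "map_mat complex_of_real ?Q *\<^sub>v z = l \<cdot>\<^sub>v z"
    unfolding eigenvector_def using Q by auto
  show "cmod l \<le> s"
  proof (rule ccontr)
    assume "\<not> cmod l \<le> s"
    then have L: "cmod l > s" by simp
    then have "l \<noteq> 0" "s / cmod l \<le> 1" using s_pos by (auto simp: divide_le_eq)
    let ?u = "cmod_vec z"
    have "(M *\<^sub>v ?u) $ i \<le> (s / cmod l) * (coupling *\<^sub>v ?u) $ i" if i: "i < n" for i
    proof -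
      have u: "?u \<in> carrier_vec n" "0\<^sub>v n \<le> ?u" using z(1) by (auto simp: cmod_vec_carrier cmod_vec_nonneg)
      have Pu: "0 \<le> (P *\<^sub>v ?u) $ i" using vec_leD[OF P_mult_nonneg[OF u], of i] i P_carrier by simp
      have "cmod l * ?u $ i = cmod ((map_mat complex_of_real ?Q *\<^sub>v z) $ i)"
        unfolding eigen using i z(1) by (simp add: norm_mult)
      also have "\<dots> \<le> (?Q *\<^sub>v ?u) $ i" by (rule cmod_mult_vec_le[OF Q Q_nonneg z(1) i])
      also have "\<dots> = (P *\<^sub>v ?u) $ i + (coupling *\<^sub>v ?u) $ i"
        using P_carrier coupling_carrier u(1) i by (simp add: add_mult_distrib_mat_vec[of _ n n])
      finally have "(s / cmod l) * (cmod l * ?u $ i) \<le> (s / cmod l) * ((P *\<^sub>v ?u) $ i + (coupling *\<^sub>v ?u) $ i)"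
        using L s_pos by (intro mult_left_mono) auto
      then have "s * ?u $ i \<le> (s / cmod l) * ((P *\<^sub>v ?u) $ i + (coupling *\<^sub>v ?u) $ i)"
        using \<open>l \<noteq> 0\<close> by simp
      also have "\<dots> \<le> (P *\<^sub>v ?u) $ i + (s / cmod l) * (coupling *\<^sub>v ?u) $ i"
        using mult_left_le_one_le[OF Pu _ \<open>s / cmod l \<le> 1\<close>] L s_pos by (simp add: distrib_left)
      finally show ?thesis using M_mult_vec[OF u(1)] i P_carrier u(1) by simp
    qed
    moreover have "s / cmod l < 1" using L s_pos by (simp add: divide_less_eq)
    ultimately show False using no_dominated_modulus_vector[OF z, of "s / cmod l"] s_pos by simp
  qed
qed

lemma minv_coupling_eigenvector:
  assumes "eigenvector (map_mat complex_of_real (minv M * coupling)) z l"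
  shows "z \<in> carrier_vec n" "z \<noteq> 0\<^sub>v n"
    and "map_mat complex_of_real coupling *\<^sub>v z =
         l \<cdot>\<^sub>v (complex_of_real s \<cdot>\<^sub>v z - map_mat complex_of_real P *\<^sub>v z)"
proof -
  let ?T = "minv M * coupling"
  let ?c = "map_mat complex_of_real"
  note inverse = minv_inverse[OF M_carrier nonsingular]
  have T: "?T \<in> carrier_mat n n" using inverse(1) coupling_carrier by simp
  then have z: "z \<in> carrier_vec n" "z \<noteq> 0\<^sub>v n" and eigen: "?c ?T *\<^sub>v z = l \<cdot>\<^sub>v z"
    using assms unfolding eigenvector_def by auto
  then show "z \<in> carrier_vec n" "z \<noteq> 0\<^sub>v n" by auto
  have "M * ?T = coupling"
    using inverse coupling_carrier M_carrier by (simp add: assoc_mult_mat[symmetric, of _ n n _ n _ n])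
  then have "?c coupling = ?c M * ?c ?T" using M_carrier T by (metis of_real_hom.mat_hom_mult)
  then have "?c coupling *\<^sub>v z = ?c M *\<^sub>v (?c ?T *\<^sub>v z)"
    using M_carrier T z(1) by (simp add: assoc_mult_mat_vec[of _ n n _ n])
  also have "\<dots> = l \<cdot>\<^sub>v (?c M *\<^sub>v z)"
    unfolding eigen using M_carrier z(1) by (simp add: mult_mat_vec[of _ n n])
  also have "?c M = complex_of_real s \<cdot>\<^sub>m 1\<^sub>m n - ?c P"
    unfolding M_split using P_carrier by (intro eq_matI) auto
  finally show "?c coupling *\<^sub>v z = l \<cdot>\<^sub>v (complex_of_real s \<cdot>\<^sub>v z - ?c P *\<^sub>v z)"
    using P_carrier z(1) by (simp add: shifted_identity_mult_vec[of _ n])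
qed

text \<open>Spectral bound for M\<inverse> coupling: an eigenvalue l with |l| > 1 would make the modulus of its
  eigenvector a dominated direction with \<theta> = 1 / |l|.\<close>
lemma rho_minv_coupling_le: "rho (minv M * coupling) \<le> 1"
proof (rule rho_le_eigenvalue_bound[OF _ dim_pos])
  let ?c = "map_mat complex_of_real"
  show "minv M * coupling \<in> carrier_mat n n"
    using minv_inverse(1)[OF M_carrier nonsingular] coupling_carrier by simp
  fix z l assume "eigenvector (?c (minv M * coupling)) z l"
  note z = minv_coupling_eigenvector[OF this]
  show "cmod l \<le> 1"
  proof (rule ccontr)
    assume "\<not> cmod l \<le> 1"
    then have L: "cmod l > 1" by simp
    let ?u = "cmod_vec z"
    have "(M *\<^sub>v ?u) $ i \<le> (1 / cmod l) * (coupling *\<^sub>v ?u) $ i" if i: "i < n" for i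
    proof -
      have u: "?u \<in> carrier_vec n" using z(1) by (simp add: cmod_vec_carrier)
      have expanded: "l * complex_of_real s * z $ i = l * (?c P *\<^sub>v z) $ i + (?c coupling *\<^sub>v z) $ i"
        using arg_cong[OF z(3), of "\<lambda>v. v $ i"] i z(1) P_carrier by (simp add: algebra_simps)
      have "cmod l * s * ?u $ i = cmod (l * complex_of_real s * z $ i)"
        using i z(1) s_pos by (simp add: norm_mult)
      also have "\<dots> = cmod (l * (?c P *\<^sub>v z) $ i + (?c coupling *\<^sub>v z) $ i)"
        unfolding expanded ..
      also have "\<dots> \<le> cmod l * cmod ((?c P *\<^sub>v z) $ i) + cmod ((?c coupling *\<^sub>v z) $ i)"
        by (rule order_trans[OF norm_triangle_ineq]) (simp add: norm_mult)
      also have "\<dots> \<le> cmod l * (P *\<^sub>v ?u) $ i + (coupling *\<^sub>v ?u) $ i"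
        using cmod_mult_vec_le[OF P_carrier P_nonneg z(1) i]
          cmod_mult_vec_le[OF coupling_carrier coupling_nonneg z(1) i]
        by (intro add_mono mult_left_mono) auto
      finally have "(s * ?u $ i - (P *\<^sub>v ?u) $ i) * cmod l \<le> (coupling *\<^sub>v ?u) $ i"
        by (simp add: algebra_simps)
      then have "s * ?u $ i - (P *\<^sub>v ?u) $ i \<le> (coupling *\<^sub>v ?u) $ i / cmod l"
        using L by (subst pos_le_divide_eq) auto
      then show ?thesis using M_mult_vec[OF u] i P_carrier u by simp
    qed
    moreover have "1 / cmod l < 1" using L by (simp add: divide_less_eq)
    ultimately show False using no_dominated_modulus_vector[OF z(1,2), of "1 / cmod l"] by simp
  qed
qed

lemma jacobian_M_matrix: "M_matrix n (M - b_left n b xs - b_right n b xs)"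
proof -
  have "M - b_left n b xs - b_right n b xs = s \<cdot>\<^sub>m 1\<^sub>m n - (P + coupling)"
    unfolding M_split coupling_def using P_carrier by (intro eq_matI) (auto simp: b_left_def b_right_def)
  moreover have "nonneg_mat (P + coupling)"
    using P_nonneg coupling_nonneg P_carrier coupling_carrier unfolding nonneg_mat_def by auto
  ultimately show ?thesis
    unfolding M_matrix_def using P_carrier coupling_carrier M_carrier rho_P_plus_coupling_le
    by (intro conjI exI[of _ s] exI[of _ "P + coupling"]) (auto simp: minus_carrier_mat)
qed

end

theorem mainTheorem7:
  fixes n :: nat and M :: "real mat" and a xs :: "real vec"
    and b :: "real vec \<Rightarrow> real vec \<Rightarrow> real vec"
  assumes n: "n > 0"
    and M: "nonsingular_M_matrix n M"
    and a: "a \<in> carrier_vec n" "nonneg_vec a"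
    and b: "bilinear_vec n b"
    and bpos: "\<And>x y. x \<in> carrier_vec n \<Longrightarrow> y \<in> carrier_vec n \<Longrightarrow>
                 nonneg_vec x \<Longrightarrow> nonneg_vec y \<Longrightarrow> nonneg_vec (b x y)"
    and xs: "qve_minimal_solution n M a b xs"
    and xpos: "pos_vec xs"
  shows "rho (minv M * (b_left n b xs + b_right n b xs)) \<le> 1 \<and>
         M_matrix n (M - b_left n b xs - b_right n b xs)"
proof -
  obtain s P where "P \<in> carrier_mat n n" "nonneg_mat P" "M = s \<cdot>\<^sub>m 1\<^sub>m n - P" "invertible_mat M"
    using M unfolding nonsingular_M_matrix_def M_matrix_def by blast
  then interpret qve_positive_minimal_solution n M s P a b xs
    using n a b bpos xs xpos by unfold_locales auto
  show ?thesis using rho_minv_coupling_le jacobian_M_matrix unfolding coupling_def by simp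
qed

end
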